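(* Let $D$ be any distribution of $(X,A,Y)$ on $\mathcal{X}\times\{0,1\}\times\{0,1\}$ ($\mathcal{X}$ discrete), and let $\tilde D$ be its biased version with bias parameters $\beta_p,\beta_n,\nu\in(0,1)$. Let $\mathcal{H}$ be any class of classifiers $\mathcal{X}\times\{0,1\}\to\{0,1\}$, $\mathcal{H}_{\mathrm{fair,EO}}=\{f\in\mathcal{H}:TPR_0(f)=TPR_1(f)\}$ and $\widetilde{\mathcal{H}}_{\mathrm{fair,EO}}=\{f\in\mathcal{H}:\widetilde{TPR}_0(f)=\widetilde{TPR}_1(f)\}$. Then for every $h\in\mathcal{H}$, $\widetilde{TPR}_0(h)=TPR_0(h)$ and $\widetilde{TPR}_1(h)=TPR_1(h)$; hence $\mathcal{H}_{\mathrm{fair,EO}}=\widetilde{\mathcal{H}}_{\mathrm{fair,EO}}$.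
   Context: $TPR_a(f)=\Pr_D[f(X,A)=1\mid Y=1,A=a]$ and $\widetilde{TPR}_a(f)=\Pr_{\tilde D}[f(X,A)=1\mid\tilde Y=1,A=a]$. Biased distribution $\tilde D$: draw $(X,A,Y)\sim D$; points with $A=1$ are kept unchanged; points with $A=0,Y=1$ survive independently with probability $\beta_p$, points with $A=0,Y=0$ survive independently with probability $\beta_n$; each surviving point with $A=0,Y=1$ keeps label $1$ with probability $1-\nu$ and is flipped to $0$ with probability $\nu$, independently. $\tilde D$ is the distribution of the resulting $(X,A,\tilde Y)$ among surviving points. *)

theory Defs
  imports "HOL-Probability.Probability"
begin

text \<open>Conventions: a data point is (x, a, y) with the group attribute a and the
label y encoded as bool (True = 1, False = 0).\<close>

definition TPR :: "('x \<times> bool \<times> bool) pmf \<Rightarrow> ('x \<Rightarrow> bool \<Rightarrow> bool) \<Rightarrow> bool \<Rightarrow> real" where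
  "TPR D f a =
     measure_pmf.prob D {(x, a', y). f x a' \<and> y \<and> a' = a}
     / measure_pmf.prob D {(x, a', y). y \<and> a' = a}"

text \<open>One draw of the biasing process: None = the point is removed.\<close>
definition bias_step :: "real \<Rightarrow> real \<Rightarrow> real \<Rightarrow> ('x \<times> bool \<times> bool)
    \<Rightarrow> ('x \<times> bool \<times> bool) option pmf" where
  "bias_step \<beta>p \<beta>n \<nu> p = (case p of (x, a, y) \<Rightarrow>
     if a then return_pmf (Some (x, a, y))
     else if y then
       bind_pmf (bernoulli_pmf \<beta>p) (\<lambda>s. if s
          then map_pmf (\<lambda>flip. Some (x, a, \<not> flip)) (bernoulli_pmf \<nu>)
          else return_pmf None)
     else
       bind_pmf (bernoulli_pmf \<beta>n) (\<lambda>s. if s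
          then return_pmf (Some (x, a, y))
          else return_pmf None))"

definition biased :: "real \<Rightarrow> real \<Rightarrow> real \<Rightarrow> ('x \<times> bool \<times> bool) pmf
    \<Rightarrow> ('x \<times> bool \<times> bool) pmf" where
  "biased \<beta>p \<beta>n \<nu> D =
     map_pmf the (cond_pmf (bind_pmf D (bias_step \<beta>p \<beta>n \<nu>)) {z. z \<noteq> None})"

definition H_fair_EO :: "('x \<times> bool \<times> bool) pmf \<Rightarrow> ('x \<Rightarrow> bool \<Rightarrow> bool) set
    \<Rightarrow> ('x \<Rightarrow> bool \<Rightarrow> bool) set" where
  "H_fair_EO D H = {f \<in> H. TPR D f False = TPR D f True}"

end

theory Submission
  imports Defs
begin

text \<open>On a point with label 1 in group a the biasing process acts independently of x:
it keeps the point with label 1 with probability 1 if a = 1 and \<beta>p (1 - \<nu>) if a = 0.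
Hence, before conditioning on survival, every event of the form
"y = 1, a fixed, some condition on (x, a)" has its mass multiplied by a factor that
depends only on a, and conditioning on survival divides all masses by one common
constant. Both factors cancel in the ratio defining the true positive rate of group a.\<close>

lemma measure_cond_pmf:
  assumes "set_pmf p \<inter> s \<noteq> {}"
  shows "measure_pmf.prob (cond_pmf p s) A = measure_pmf.prob p (s \<inter> A) / measure_pmf.prob p s"
proof -
  have "emeasure (measure_pmf p) s \<noteq> 0"
    using assms by (simp add: measure_pmf.emeasure_eq_measure measure_measure_pmf_not_zero)
  then show ?thesis
    by (simp add: cond_pmf.rep_eq[OF assms] measure_pmf.emeasure_eq_measure)
qed

definition positive_event :: "('x \<Rightarrow> bool \<Rightarrow> bool) \<Rightarrow> bool \<Rightarrow> ('x \<times> bool \<times> bool) set" where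
  "positive_event Q a = {(x, a', y). Q x a' \<and> y \<and> a' = a}"

definition positive_retention :: "real \<Rightarrow> real \<Rightarrow> bool \<Rightarrow> real" where
  "positive_retention \<beta>p \<nu> a = (if a then 1 else \<beta>p * (1 - \<nu>))"

lemma TPR_conv_positive_event:
  "TPR D f a = measure_pmf.prob D (positive_event f a)
                 / measure_pmf.prob D (positive_event (\<lambda>_ _. True) a)"
  by (simp add: TPR_def positive_event_def)

lemma emeasure_bias_step_positive_event:
  assumes "0 \<le> \<beta>p" "\<beta>p \<le> 1" "0 \<le> \<beta>n" "\<beta>n \<le> 1" "0 \<le> \<nu>" "\<nu> \<le> 1"
  shows "emeasure (measure_pmf (bias_step \<beta>p \<beta>n \<nu> p)) (Some ` positive_event Q a)
           = ennreal (positive_retention \<beta>p \<nu> a) * indicator (positive_event Q a) p"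
proof -
  obtain x a' y where p: "p = (x, a', y)" by (cases p) auto
  have Collect_Not: "Collect Not = {False}" by auto
  show ?thesis
    using assms unfolding p bias_step_def positive_event_def positive_retention_def
    by (auto simp: Collect_Not ennreal_mult indicator_def image_iff vimage_def
        emeasure_pmf_single mult.commute)
qed

lemma bias_step_survives:
  assumes "0 < \<beta>p" "\<beta>p \<le> 1" "0 < \<beta>n" "\<beta>n \<le> 1"
  shows "\<exists>z. Some z \<in> set_pmf (bias_step \<beta>p \<beta>n \<nu> p)"
proof -
  obtain x a y where p: "p = (x, a, y)" by (cases p) auto
  obtain flip where "flip \<in> set_pmf (bernoulli_pmf \<nu>)"
    using set_pmf_not_empty[of "bernoulli_pmf \<nu>"] by blast
  moreover have "True \<in> set_pmf (bernoulli_pmf \<beta>p)" "True \<in> set_pmf (bernoulli_pmf \<beta>n)"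
    using assms by (simp_all add: set_pmf_iff)
  ultimately have "Some (x, a, if a \<or> \<not> y then y else \<not> flip) \<in> set_pmf (bias_step \<beta>p \<beta>n \<nu> p)"
    unfolding p bias_step_def by (cases a; cases y) (force simp: set_bind_pmf)+
  then show ?thesis ..
qed

lemma survivors_nonempty:
  assumes "0 < \<beta>p" "\<beta>p \<le> 1" "0 < \<beta>n" "\<beta>n \<le> 1"
  shows "set_pmf (bind_pmf D (bias_step \<beta>p \<beta>n \<nu>)) \<inter> {z. z \<noteq> None} \<noteq> {}"
proof -
  obtain p where "p \<in> set_pmf D"
    using set_pmf_not_empty[of D] by blast
  moreover obtain z where "Some z \<in> set_pmf (bias_step \<beta>p \<beta>n \<nu> p)"
    using bias_step_survives[OF assms] by blast
  ultimately show ?thesis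
    by (auto simp: set_bind_pmf simp del: not_None_eq)
qed

lemma measure_biased_positive_event:
  fixes D :: "('x \<times> bool \<times> bool) pmf"
  assumes "0 < \<beta>p" "\<beta>p \<le> 1" "0 < \<beta>n" "\<beta>n \<le> 1" "0 \<le> \<nu>" "\<nu> \<le> 1"
  defines "M \<equiv> bind_pmf D (bias_step \<beta>p \<beta>n \<nu>)"
  shows "measure_pmf.prob (biased \<beta>p \<beta>n \<nu> D) (positive_event Q a)
           = positive_retention \<beta>p \<nu> a * measure_pmf.prob D (positive_event Q a)
               / measure_pmf.prob M {z. z \<noteq> None}"
proof -
  let ?E = "positive_event Q a" and ?c = "positive_retention \<beta>p \<nu> a"
  have "0 \<le> ?c"
    using assms by (simp add: positive_retention_def)
  have "emeasure (measure_pmf M) (Some ` ?E) = (\<integral>\<^sup>+p. ennreal ?c * indicator ?E p \<partial>D)"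
    using assms by (simp add: M_def emeasure_bias_step_positive_event)
  also have "\<dots> = ennreal ?c * emeasure (measure_pmf D) ?E"
    by (simp add: nn_integral_cmult_indicator)
  finally have "measure_pmf.prob M (Some ` ?E) = ?c * measure_pmf.prob D ?E"
    using \<open>0 \<le> ?c\<close> by (simp add: measure_pmf.emeasure_eq_measure ennreal_mult[symmetric])
  moreover have "{z. z \<noteq> None} \<inter> the -` ?E = Some ` ?E"
    by auto
  ultimately show ?thesis
    unfolding biased_def measure_map_pmf M_def measure_cond_pmf[OF survivors_nonempty[OF assms(1-4)]]
    by simp
qed

lemma TPR_biased:
  assumes "0 < \<beta>p" "\<beta>p \<le> 1" "0 < \<beta>n" "\<beta>n \<le> 1" "0 \<le> \<nu>" "\<nu> < 1"
  shows "TPR (biased \<beta>p \<beta>n \<nu> D) f a = TPR D f a"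
proof -
  have "positive_retention \<beta>p \<nu> a \<noteq> 0"
    using assms by (simp add: positive_retention_def)
  moreover have "measure_pmf.prob (bind_pmf D (bias_step \<beta>p \<beta>n \<nu>)) {z. z \<noteq> None} \<noteq> 0"
    using measure_measure_pmf_not_zero[OF survivors_nonempty] assms by simp
  ultimately show ?thesis
    using assms by (simp add: TPR_conv_positive_event measure_biased_positive_event)
qed

theorem corollary3p6:
  fixes D :: "('x \<times> bool \<times> bool) pmf"
    and H :: "('x \<Rightarrow> bool \<Rightarrow> bool) set"
    and \<beta>p \<beta>n \<nu> :: real
  assumes "0 < \<beta>p" "\<beta>p < 1" "0 < \<beta>n" "\<beta>n < 1" "0 < \<nu>" "\<nu> < 1"
  shows "(\<forall>h\<in>H. TPR (biased \<beta>p \<beta>n \<nu> D) h False = TPR D h False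
               \<and> TPR (biased \<beta>p \<beta>n \<nu> D) h True = TPR D h True)
         \<and> H_fair_EO D H = H_fair_EO (biased \<beta>p \<beta>n \<nu> D) H"
proof -
  have "TPR (biased \<beta>p \<beta>n \<nu> D) h a = TPR D h a" for h a
    using assms by (intro TPR_biased) auto
  then show ?thesis
    unfolding H_fair_EO_def by auto
qed

end
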